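(* Let $v\in\mathcal{K}\setminus\mathcal{Y}_{\mu_1}$ and $w\in C_v^+\cap\mathcal{K}$ with $w\ne v$. Then $f_0$ decreases along the segment from $w$ to $v$: the function $t\mapsto f_0(w+t(v-w))$ is strictly decreasing on $[0,1]$.
   Context: $\mathcal{K}\subset\mathbb{R}^q$ is an open, bounded, convex set with $0\in\mathcal{K}$. $f:\mathcal{K}\to\mathbb{R}$ is $C^2$ with $D^2f\ge -MI_q$ ($M\ge0$) and $f(v)\to\infty$ as $v\to\partial\mathcal{K}$, $v\in\mathcal{K}$; set $f_0(v)=f(v)+\frac M2|v|^2$ (convex on $\mathcal{K}$). Let $g:\mathbb{S}^{q-1}\to(0,\infty)$ be the Lipschitz function such that $\nu\mapsto g(\nu)\nu$ parametrizes $\partial\mathcal{K}$. Define $G(x)=g(x/|x|)x$ for $x\ne0$, $G(0)=0$, on $\overline{B_1(0)}$, and $\mathcal{Y}_\mu=G(B_\mu(0))$ for $0<\mu<1$. Fix $r_0>0$ and $0<\mu_0<1$ with $\overline{B_{r_0}(0)}\subset\mathcal{Y}_{\mu_0}$. Let $s_0=\max\{f_0(v):v\in\partial B_{r_0}(0)\}$ and fix $\mu_1\in(\mu_0,1)$ such that $f_0(v)\ge 1+s_0$ for all $v\in\mathcal{K}\setminus\mathcal{Y}_{\mu_1}$. Cones: for $v\in\mathcal{K}\setminus\overline{B_{r_0}(0)}$, $C_v^-$ is the closed (solid) half-cone with vertex $v$, axis the ray from $v$ through $0$, and half-aperture $\alpha(v)\in(0,\pi/2)$ with $\sin\alpha(v)=r_0/|v|$;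 $C_v^+=\{v+\xi:\ v-\xi\in C_v^-\}$ is its reflection through $v$. *)

theory Defs
  imports "HOL-Analysis.Analysis"
begin

definition f0 :: "('a::euclidean_space \<Rightarrow> real) \<Rightarrow> real \<Rightarrow> 'a \<Rightarrow> real" where
  "f0 f M v = f v + M / 2 * (norm v)\<^sup>2"

definition GG :: "('a::euclidean_space \<Rightarrow> real) \<Rightarrow> 'a \<Rightarrow> 'a" where
  "GG g x = (if x = 0 then 0 else g (x /\<^sub>R norm x) *\<^sub>R x)"

definition YY :: "('a::euclidean_space \<Rightarrow> real) \<Rightarrow> real \<Rightarrow> 'a set" where
  "YY g \<mu> = GG g ` ball 0 \<mu>"

definition cone_alpha :: "real \<Rightarrow> 'a::euclidean_space \<Rightarrow> real" where
  "cone_alpha r0 v = arcsin (r0 / norm v)"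

text \<open>C_v^-: closed solid half-cone with vertex v, axis the ray from v through 0,
  half-aperture alpha(v): the points x whose direction x - v makes angle at most alpha(v)
  with -v (the vertex itself included).\<close>
definition cone_minus :: "real \<Rightarrow> 'a::euclidean_space \<Rightarrow> 'a set" where
  "cone_minus r0 v = {x. (x - v) \<bullet> (- v) \<ge> norm (x - v) * norm v * cos (cone_alpha r0 v)}"

definition cone_plus :: "real \<Rightarrow> 'a::euclidean_space \<Rightarrow> 'a set" where
  "cone_plus r0 v = {v + \<xi> | \<xi>. v - \<xi> \<in> cone_minus r0 v}"

end

theory Submission
  imports Defs
begin

text \<open>Since \<open>\<bar>v\<bar> > r0\<close> and \<open>w\<close> lies in the reflected cone, the ray from \<open>v\<close> in direction
  \<open>v - w\<close> meets the sphere \<open>\<bar>x\<bar> = r0\<close> at some point \<open>p\<close>, and \<open>f\<^sub>0(p) < f\<^sub>0(v)\<close> by the choice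
  of \<open>\<mu>\<^sub>1\<close>. As \<open>f\<^sub>0\<close> is convex along the line through \<open>w\<close>, \<open>v\<close>, \<open>p\<close>, the drop from \<open>v\<close> to
  \<open>p\<close> forces a negative slope at \<open>v\<close>, hence on the whole segment from \<open>w\<close> to \<open>v\<close>.\<close>

lemma YY_subset:
  fixes K :: "'a::euclidean_space set"
  assumes "open K" "convex K" "0 \<in> K"
    and boundary: "(\<lambda>\<nu>. g \<nu> *\<^sub>R \<nu>) ` sphere 0 1 \<subseteq> frontier K"
    and "\<mu> \<le> 1"
  shows "YY g \<mu> \<subseteq> K"
proof
  fix y assume "y \<in> YY g \<mu>"
  then obtain x where x: "norm x < \<mu>" "y = GG g x" unfolding YY_def by auto
  show "y \<in> K"
  proof (cases "x = 0")
    case True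
    then show ?thesis using x \<open>0 \<in> K\<close> by (simp add: GG_def)
  next
    case False
    let ?q = "g (x /\<^sub>R norm x) *\<^sub>R (x /\<^sub>R norm x)"
    have "x /\<^sub>R norm x \<in> sphere 0 1" using False by simp
    then have "?q \<in> frontier K" using boundary by blast
    then have "?q \<in> closure K" by (simp add: frontier_def)
    then have "?q - (1 - norm x) *\<^sub>R (?q - 0) \<in> interior K"
      by (intro mem_interior_closure_convex_shrink[OF \<open>convex K\<close>])
         (use assms x False in \<open>auto simp: interior_open\<close>)
    moreover have "?q - (1 - norm x) *\<^sub>R (?q - 0) = y"
      using x False by (simp add: GG_def algebra_simps)
    ultimately show ?thesis using interior_subset by blast
  qed
qed

text \<open>The hypothesis says that \<open>u\<close> makes an angle with \<open>-v\<close> no larger than the half-aperture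
  of the cone from \<open>v\<close> tangent to the sphere; then the closest point of the ray to the origin
  lies in the closed ball.\<close>

lemma ray_meets_sphere:
  fixes u v :: "'a::real_inner"
  assumes "0 < r" "r < norm v" "u \<noteq> 0"
    and angle: "norm u * sqrt ((norm v)\<^sup>2 - r\<^sup>2) \<le> - (u \<bullet> v)"
  shows "\<exists>l>0. norm (v + l *\<^sub>R u) = r"
proof -
  define a where "a = - (u \<bullet> v)"
  define n where "n = (norm u)\<^sup>2"
  have "n > 0" unfolding n_def using \<open>u \<noteq> 0\<close> by simp
  have "0 \<le> norm u * sqrt ((norm v)\<^sup>2 - r\<^sup>2)"
    using assms by simp
  then have "(norm u * sqrt ((norm v)\<^sup>2 - r\<^sup>2))\<^sup>2 \<le> a\<^sup>2"
    using power_mono[OF angle[folded a_def]] by blast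
  moreover have "(norm u * sqrt ((norm v)\<^sup>2 - r\<^sup>2))\<^sup>2 = n * ((norm v)\<^sup>2 - r\<^sup>2)"
    using assms by (simp add: n_def power_mult_distrib)
  ultimately have "n * ((norm v)\<^sup>2 - r\<^sup>2) \<le> a\<^sup>2" by simp
  have a_nonneg: "0 \<le> a"
    using angle \<open>0 \<le> norm u * _\<close> by (simp add: a_def)
  have norm_ray: "(norm (v + t *\<^sub>R u))\<^sup>2 = (norm v)\<^sup>2 - 2 * t * a + t\<^sup>2 * n" for t
    unfolding power2_norm_eq_inner a_def n_def
    by (simp add: inner_add_left inner_add_right inner_commute algebra_simps power2_eq_square)
  define t0 where "t0 = a / n"
  have "(norm (v + t0 *\<^sub>R u))\<^sup>2 = (norm v)\<^sup>2 - a\<^sup>2 / n"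
    unfolding norm_ray using \<open>n > 0\<close> by (simp add: t0_def power2_eq_square field_simps)
  also have "\<dots> \<le> r\<^sup>2"
    using \<open>n * _ \<le> a\<^sup>2\<close> \<open>n > 0\<close> by (simp add: field_simps)
  finally have "norm (v + t0 *\<^sub>R u) \<le> r"
    by (rule power2_le_imp_le) (use \<open>0 < r\<close> in simp)
  moreover have "0 \<le> t0"
    using a_nonneg \<open>n > 0\<close> by (simp add: t0_def)
  moreover have "\<forall>t. 0 \<le> t \<and> t \<le> t0 \<longrightarrow> isCont (\<lambda>t. norm (v + t *\<^sub>R u)) t"
    by (intro allI impI continuous_intros)
  ultimately obtain l where "0 \<le> l" "norm (v + l *\<^sub>R u) = r"
    using IVT2[of "\<lambda>t. norm (v + t *\<^sub>R u)" t0 r 0] \<open>r < norm v\<close> by auto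
  moreover have "l \<noteq> 0"
    using \<open>norm (v + l *\<^sub>R u) = r\<close> \<open>r < norm v\<close> by auto
  ultimately show ?thesis by (metis order_le_less)
qed

lemma cone_plus_ray_meets_sphere:
  fixes v w :: "'a::euclidean_space"
  assumes "0 < r0" "r0 < norm v" "w \<in> cone_plus r0 v" "w \<noteq> v"
  shows "\<exists>l>0. norm (v + l *\<^sub>R (v - w)) = r0"
proof (rule ray_meets_sphere)
  have "0 < norm v" using assms by linarith
  have ratio: "0 < r0 / norm v" "r0 / norm v < 1"
    using assms \<open>0 < norm v\<close> by (auto simp: divide_less_eq)
  have "norm v * cos (cone_alpha r0 v) = sqrt ((norm v)\<^sup>2 - r0\<^sup>2)"
  proof -
    have "norm v * cos (cone_alpha r0 v) = sqrt ((norm v)\<^sup>2 * (1 - (r0 / norm v)\<^sup>2))"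
      using ratio \<open>0 < norm v\<close>
      by (simp add: cone_alpha_def cos_arcsin real_sqrt_mult power2_le_iff_abs_le)
    also have "\<dots> = sqrt ((norm v)\<^sup>2 - r0\<^sup>2)"
      using \<open>0 < norm v\<close> by (simp add: field_simps power_divide)
    finally show ?thesis .
  qed
  moreover have "(v - w) \<bullet> (- v) \<ge> norm (v - w) * norm v * cos (cone_alpha r0 v)"
    using assms(3) by (auto simp: cone_plus_def cone_minus_def algebra_simps)
  ultimately show "norm (v - w) * sqrt ((norm v)\<^sup>2 - r0\<^sup>2) \<le> - ((v - w) \<bullet> v)"
    by (simp add: mult.assoc)
qed (use assms in auto)

lemma has_real_derivative_f0_line:
  fixes f :: "'a::euclidean_space \<Rightarrow> real" and Df :: "'a \<Rightarrow> 'a \<Rightarrow>\<^sub>L real"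
  assumes "(f has_derivative blinfun_apply (Df (w + t *\<^sub>R u))) (at (w + t *\<^sub>R u))"
  shows "((\<lambda>t. f0 f M (w + t *\<^sub>R u)) has_real_derivative
           Df (w + t *\<^sub>R u) u + M * ((w + t *\<^sub>R u) \<bullet> u)) (at t)"
proof -
  have "((\<lambda>t. w + t *\<^sub>R u) has_derivative (\<lambda>h. h *\<^sub>R u)) (at t)"
    by (auto intro!: derivative_eq_intros)
  from has_derivative_compose[OF this assms]
  have "((\<lambda>t. f (w + t *\<^sub>R u)) has_derivative (\<lambda>h. Df (w + t *\<^sub>R u) (h *\<^sub>R u))) (at t)" .
  then have "((\<lambda>t. f (w + t *\<^sub>R u)) has_real_derivative Df (w + t *\<^sub>R u) u) (at t)"
    by (rule has_derivative_imp_has_field_derivative) (simp add: blinfun.scaleR_right)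
  then show ?thesis
    unfolding f0_def power2_norm_eq_inner
    by (auto intro!: derivative_eq_intros simp: inner_commute algebra_simps)
qed

lemma has_real_derivative_f0_line_slope:
  fixes Df :: "'a::real_inner \<Rightarrow> 'a \<Rightarrow>\<^sub>L real"
    and D2f :: "'a \<Rightarrow> 'a \<Rightarrow>\<^sub>L ('a \<Rightarrow>\<^sub>L real)"
  assumes "(Df has_derivative blinfun_apply (D2f (w + t *\<^sub>R u))) (at (w + t *\<^sub>R u))"
  shows "((\<lambda>t. Df (w + t *\<^sub>R u) u + M * ((w + t *\<^sub>R u) \<bullet> u)) has_real_derivative
           D2f (w + t *\<^sub>R u) u u + M * (u \<bullet> u)) (at t)"
proof -
  have "((\<lambda>t. w + t *\<^sub>R u) has_derivative (\<lambda>h. h *\<^sub>R u)) (at t)"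
    by (auto intro!: derivative_eq_intros)
  from has_derivative_compose[OF this assms]
  have "((\<lambda>t. Df (w + t *\<^sub>R u)) has_derivative (\<lambda>h. D2f (w + t *\<^sub>R u) (h *\<^sub>R u))) (at t)" .
  then have "((\<lambda>t. Df (w + t *\<^sub>R u) u) has_derivative (\<lambda>h. D2f (w + t *\<^sub>R u) (h *\<^sub>R u) u)) (at t)"
    by (rule bounded_linear.has_derivative[OF blinfun.bounded_linear_left])
  then have "((\<lambda>t. Df (w + t *\<^sub>R u) u) has_real_derivative D2f (w + t *\<^sub>R u) u u) (at t)"
    by (rule has_derivative_imp_has_field_derivative) (simp add: blinfun.scaleR_left blinfun.scaleR_right)
  then show ?thesis
    by (auto intro!: derivative_eq_intros simp: algebra_simps)
qed

lemma strictly_decreasing_before_drop: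
  fixes \<phi> \<phi>' :: "real \<Rightarrow> real"
  assumes deriv: "\<And>t. t \<in> {a..c} \<Longrightarrow> (\<phi> has_real_derivative \<phi>' t) (at t)"
    and slope_mono: "mono_on {a..c} \<phi>'"
    and "a \<le> b" "b < c" and drop: "\<phi> c < \<phi> b"
    and "a \<le> s" "s < t" "t \<le> b"
  shows "\<phi> t < \<phi> s"
proof -
  have "\<phi>' b < 0"
  proof (rule ccontr)
    assume "\<not> \<phi>' b < 0"
    have "\<phi> b \<le> \<phi> c"
    proof (rule DERIV_nonneg_imp_nondecreasing[OF less_imp_le[OF \<open>b < c\<close>]])
      fix y assume "b \<le> y" "y \<le> c"
      then have "y \<in> {a..c}" "\<phi>' b \<le> \<phi>' y"
        using mono_onD[OF slope_mono, of b y] \<open>a \<le> b\<close> \<open>b < c\<close> by auto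
      then show "\<exists>z. (\<phi> has_real_derivative z) (at y) \<and> 0 \<le> z"
        using deriv \<open>\<not> \<phi>' b < 0\<close> by force
    qed
    with drop show False by simp
  qed
  show ?thesis
  proof (rule DERIV_neg_imp_decreasing[OF \<open>s < t\<close>])
    fix y assume "s \<le> y" "y \<le> t"
    then have "y \<in> {a..c}" "\<phi>' y \<le> \<phi>' b"
      using mono_onD[OF slope_mono, of y b] assms(3-8) by auto
    then show "\<exists>z. (\<phi> has_real_derivative z) (at y) \<and> z < 0"
      using deriv \<open>\<phi>' b < 0\<close> by force
  qed
qed

text \<open>The lower Hessian bound makes \<open>f\<^sub>0\<close> convex along every line segment in \<open>K\<close>.\<close>

lemma f0_line_slope_mono:
  fixes K :: "'a::euclidean_space set" and Df :: "'a \<Rightarrow> 'a \<Rightarrow>\<^sub>L real"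
    and D2f :: "'a \<Rightarrow> 'a \<Rightarrow>\<^sub>L ('a \<Rightarrow>\<^sub>L real)"
  assumes f_D2: "\<And>x. x \<in> K \<Longrightarrow> (Df has_derivative blinfun_apply (D2f x)) (at x)"
    and hess_lb: "\<And>x h. x \<in> K \<Longrightarrow> D2f x h h \<ge> - M * (norm h)\<^sup>2"
    and segment: "\<And>t. t \<in> {a..c} \<Longrightarrow> w + t *\<^sub>R u \<in> K"
  shows "mono_on {a..c} (\<lambda>t. Df (w + t *\<^sub>R u) u + M * ((w + t *\<^sub>R u) \<bullet> u))"
proof (rule mono_onI)
  fix s t assume "s \<in> {a..c}" "t \<in> {a..c}" "s \<le> t"
  show "Df (w + s *\<^sub>R u) u + M * ((w + s *\<^sub>R u) \<bullet> u)
      \<le> Df (w + t *\<^sub>R u) u + M * ((w + t *\<^sub>R u) \<bullet> u)"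
  proof (rule DERIV_nonneg_imp_nondecreasing[OF \<open>s \<le> t\<close>])
    fix y assume "s \<le> y" "y \<le> t"
    then have y_K: "w + y *\<^sub>R u \<in> K"
      using segment \<open>s \<in> {a..c}\<close> \<open>t \<in> {a..c}\<close> by simp
    have "0 \<le> D2f (w + y *\<^sub>R u) u u + M * (u \<bullet> u)"
      using hess_lb[OF y_K, of u] by (simp add: power2_norm_eq_inner)
    with has_real_derivative_f0_line_slope[of Df D2f w y u M, OF f_D2[OF y_K]]
    show "\<exists>z. ((\<lambda>t. Df (w + t *\<^sub>R u) u + M * ((w + t *\<^sub>R u) \<bullet> u))
                  has_real_derivative z) (at y) \<and> 0 \<le> z"
      by blast
  qed
qed

lemma convex_line_between:
  fixes K :: "'a::real_vector set"
  assumes "convex K" "w \<in> K" "w + c *\<^sub>R u \<in> K" "t \<in> {0..c}"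
  shows "w + t *\<^sub>R u \<in> K"
proof (cases "c = 0")
  case True
  then show ?thesis using assms by simp
next
  case False
  then have "0 < c" using assms(4) by simp
  have "(1 - t / c) *\<^sub>R w + (t / c) *\<^sub>R (w + c *\<^sub>R u) \<in> K"
    by (rule convexD[OF assms(1-3)]) (use \<open>0 < c\<close> assms(4) in auto)
  moreover have "(t / c) *\<^sub>R (c *\<^sub>R u) = t *\<^sub>R u"
    using False by simp
  then have "(1 - t / c) *\<^sub>R w + (t / c) *\<^sub>R (w + c *\<^sub>R u) = w + t *\<^sub>R u"
    by (simp add: scaleR_add_right algebra_simps)
  ultimately show ?thesis by simp
qed

lemma f0_le_Sup_sphere:
  fixes f :: "'a::euclidean_space \<Rightarrow> real"
  assumes "continuous_on (sphere 0 r) f" "p \<in> sphere 0 r"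
  shows "f0 f M p \<le> Sup (f0 f M ` sphere 0 r)"
proof -
  have "continuous_on (sphere 0 r) (f0 f M)"
    unfolding f0_def using assms(1) by (intro continuous_intros)
  then have "bdd_above (f0 f M ` sphere 0 r)"
    by (intro bounded_imp_bdd_above compact_imp_bounded compact_continuous_image) auto
  then show ?thesis
    using assms(2) by (simp add: cSup_upper)
qed

theorem corollary2p5:
  fixes K :: "'a::euclidean_space set"
    and f :: "'a \<Rightarrow> real"
    and Df :: "'a \<Rightarrow> 'a \<Rightarrow>\<^sub>L real"
    and D2f :: "'a \<Rightarrow> 'a \<Rightarrow>\<^sub>L ('a \<Rightarrow>\<^sub>L real)"
    and M r0 \<mu>0 \<mu>1 :: real
    and g :: "'a \<Rightarrow> real"
    and v w :: 'a
  assumes K_open: "open K" and K_bounded: "bounded K" and K_convex: "convex K"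
    and K_0: "0 \<in> K"
    and f_D1: "\<And>x. x \<in> K \<Longrightarrow> (f has_derivative blinfun_apply (Df x)) (at x)"
    and f_D2: "\<And>x. x \<in> K \<Longrightarrow> (Df has_derivative blinfun_apply (D2f x)) (at x)"
    and f_D2_cont: "continuous_on K D2f"
    and M_nonneg: "M \<ge> 0"
    and hess_lb: "\<And>x h. x \<in> K \<Longrightarrow> D2f x h h \<ge> - M * (norm h)\<^sup>2"
    and f_blowup: "\<And>y. y \<in> frontier K \<Longrightarrow> filterlim f at_top (at y within K)"
    and g_pos: "\<And>\<nu>. \<nu> \<in> sphere 0 1 \<Longrightarrow> g \<nu> > 0"
    and g_lip: "\<exists>L. L-lipschitz_on (sphere 0 1) g"
    and g_param: "bij_betw (\<lambda>\<nu>. g \<nu> *\<^sub>R \<nu>) (sphere 0 1) (frontier K)"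
    and r0_pos: "r0 > 0" and \<mu>0_bounds: "0 < \<mu>0" "\<mu>0 < 1"
    and r0_\<mu>0: "cball 0 r0 \<subseteq> YY g \<mu>0"
    and \<mu>1_bounds: "\<mu>0 < \<mu>1" "\<mu>1 < 1"
    and \<mu>1_prop: "\<And>u. u \<in> K - YY g \<mu>1 \<Longrightarrow>
                    f0 f M u \<ge> 1 + Sup (f0 f M ` sphere 0 r0)"
    and v_in: "v \<in> K - YY g \<mu>1"
    and w_in: "w \<in> cone_plus r0 v \<inter> K"
    and w_ne: "w \<noteq> v"
  shows "\<forall>s\<in>{0..1}. \<forall>t\<in>{0..1}. s < t \<longrightarrow>
           f0 f M (w + t *\<^sub>R (v - w)) < f0 f M (w + s *\<^sub>R (v - w))"
proof -
  have "YY g \<mu>0 \<subseteq> K"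
    using YY_subset[OF K_open K_convex K_0 bij_betw_imp_surj_on[OF g_param, THEN equalityD1]]
      \<mu>0_bounds by simp
  with r0_\<mu>0 have ball_K: "cball 0 r0 \<subseteq> K" by blast
  have "r0 < norm v"
    using v_in r0_\<mu>0 \<mu>1_bounds by (force simp: YY_def not_le[symmetric])
  then obtain l where "l > 0" and p_sphere: "norm (v + l *\<^sub>R (v - w)) = r0"
    using cone_plus_ray_meets_sphere r0_pos w_in w_ne by blast
  define c where "c = 1 + l"
  have p_eq: "w + c *\<^sub>R (v - w) = v + l *\<^sub>R (v - w)"
    by (simp add: c_def algebra_simps)
  have segment_K: "w + t *\<^sub>R (v - w) \<in> K" if "t \<in> {0..c}" for t
    using convex_line_between[OF K_convex _ _ that] w_in ball_K p_sphere p_eq by auto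
  have "continuous_on K f"
    using f_D1 by (meson continuous_at_imp_continuous_on has_derivative_continuous)
  then have "continuous_on (sphere 0 r0) f"
    using ball_K sphere_cball by (blast intro: continuous_on_subset)
  then have "f0 f M (v + l *\<^sub>R (v - w)) \<le> Sup (f0 f M ` sphere 0 r0)"
    using p_sphere by (intro f0_le_Sup_sphere) auto
  then have drop: "f0 f M (w + c *\<^sub>R (v - w)) < f0 f M (w + 1 *\<^sub>R (v - w))"
    using \<mu>1_prop[OF v_in] p_eq by simp
  have deriv: "((\<lambda>t. f0 f M (w + t *\<^sub>R (v - w))) has_real_derivative
      Df (w + t *\<^sub>R (v - w)) (v - w) + M * ((w + t *\<^sub>R (v - w)) \<bullet> (v - w))) (at t)"
    if "t \<in> {0..c}" for t
    using has_real_derivative_f0_line[of f Df w t "v - w" M, OF f_D1[OF segment_K[OF that]]] .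
  have slope_mono: "mono_on {0..c}
      (\<lambda>t. Df (w + t *\<^sub>R (v - w)) (v - w) + M * ((w + t *\<^sub>R (v - w)) \<bullet> (v - w)))"
    by (rule f0_line_slope_mono[OF f_D2 hess_lb segment_K])
  show ?thesis
  proof (intro ballI impI)
    fix s t :: real assume "s \<in> {0..1}" "t \<in> {0..1}" "s < t"
    then show "f0 f M (w + t *\<^sub>R (v - w)) < f0 f M (w + s *\<^sub>R (v - w))"
      using strictly_decreasing_before_drop[OF deriv slope_mono _ _ drop] \<open>l > 0\<close>
      by (simp add: c_def)
  qed
qed

end
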